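(* Let $t>204$ be an integer and adopt the setting described in the context. If $r$ is a positive integer and $h\in\{0,1\}$, then $\Sigma_{r,0}$ and $\Sigma_{r+h,1}$ are not both equal to $0$.
   Context: Let $P(x,y)=x^{4}+4tx^{3}y-6tx^{2}y^{2}-4t^{2}xy^{3}+t^{2}y^{4}$. Fix complex numbers $\alpha,\beta$ with $\alpha^4=1+i\sqrt t$, $\beta^4=-1+i\sqrt t$, and for integers $x,y$ set $\xi(x,y)=\sqrt2\,\alpha(x-i\sqrt t\,y)$, $\eta(x,y)=\sqrt2\,\beta(x+i\sqrt t\,y)$, $z(x,y)=1-(\eta(x,y)/\xi(x,y))^4$. An integer pair $(x,y)$ is related to a fourth root of unity $\omega$ if $|\omega-\eta(x,y)/\xi(x,y)|<\frac{\pi}{12}|z(x,y)|$. Let $\omega\in\{\pm1,\pm i\}$ and let $(x_1,y_1)\ne(x_2,y_2)$ be two pairs of coprime positive integers, each satisfying $0<P(x,y)\le t^2$ and $xy>64t^3$, both related to $\omega$, with $|\xi(x_2,y_2)|\ge|\xi(x_1,y_1)|$. Write $\xi_i=\xi(x_i,y_i)$, $\eta_i=\eta(x_i,y_i)$, $z_1=z(x_1,y_1)$. With binomials $\binom{a}{m}=a(a-1)\cdots(a-m+1)/m!$, for positive integers $r$ and $g\in\{0,1\}$ let $A_{r,g}(z)=\sum_{m=0}^{r}\binom{r-g+\frac14}{m}\binom{2r-g-m}{r-g}(-z)^m$, $B_{r,g}(z)=\sum_{m=0}^{r-g}\binom{r-\frac14}{m}\binom{2r-g-m}{r}(-z)^m$,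 and $$\Sigma_{r,g}=\frac{\eta_2}{\xi_2}A_{r,g}(z_1)-(-1)^r\frac{\eta_1}{\xi_1}B_{r,g}(z_1).$$ *)

theory Defs
  imports Complex_Main
begin

definition Pform :: "int \<Rightarrow> int \<Rightarrow> int \<Rightarrow> int" where
  "Pform t x y = x^4 + 4*t*x^3*y - 6*t*x^2*y^2 - 4*t^2*x*y^3 + t^2*y^4"

definition sqt :: "int \<Rightarrow> complex" where
  "sqt t = complex_of_real (sqrt (real_of_int t))"

definition xi :: "int \<Rightarrow> complex \<Rightarrow> int \<Rightarrow> int \<Rightarrow> complex" where
  "xi t \<alpha> x y = complex_of_real (sqrt 2) * \<alpha> * (of_int x - \<i> * sqt t * of_int y)"

definition eta :: "int \<Rightarrow> complex \<Rightarrow> int \<Rightarrow> int \<Rightarrow> complex" where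
  "eta t \<beta> x y = complex_of_real (sqrt 2) * \<beta> * (of_int x + \<i> * sqt t * of_int y)"

definition zf :: "int \<Rightarrow> complex \<Rightarrow> complex \<Rightarrow> int \<Rightarrow> int \<Rightarrow> complex" where
  "zf t \<alpha> \<beta> x y = 1 - (eta t \<beta> x y / xi t \<alpha> x y) ^ 4"

definition related :: "int \<Rightarrow> complex \<Rightarrow> complex \<Rightarrow> int \<Rightarrow> int \<Rightarrow> complex \<Rightarrow> bool" where
  "related t \<alpha> \<beta> x y \<omega> \<longleftrightarrow>
     cmod (\<omega> - eta t \<beta> x y / xi t \<alpha> x y) < pi / 12 * cmod (zf t \<alpha> \<beta> x y)"

text \<open>Here g is 0 or 1 and r \<ge> 1, so the natural-number subtractions below never truncate.\<close>
definition Apoly :: "nat \<Rightarrow> nat \<Rightarrow> complex \<Rightarrow> complex" where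
  "Apoly r g z = (\<Sum>m = 0..r. complex_of_real ((real (r - g) + 1/4) gchoose m)
                   * of_nat ((2*r - g - m) choose (r - g)) * (-z)^m)"

definition Bpoly :: "nat \<Rightarrow> nat \<Rightarrow> complex \<Rightarrow> complex" where
  "Bpoly r g z = (\<Sum>m = 0..r - g. complex_of_real ((real r - 1/4) gchoose m)
                   * of_nat ((2*r - g - m) choose r) * (-z)^m)"

definition Sigma :: "int \<Rightarrow> complex \<Rightarrow> complex \<Rightarrow> int \<Rightarrow> int \<Rightarrow> int \<Rightarrow> int \<Rightarrow> nat \<Rightarrow> nat \<Rightarrow> complex" where
  "Sigma t \<alpha> \<beta> x1 y1 x2 y2 r g =
     eta t \<beta> x2 y2 / xi t \<alpha> x2 y2 * Apoly r g (zf t \<alpha> \<beta> x1 y1)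
     - (-1)^r * (eta t \<beta> x1 y1 / xi t \<alpha> x1 y1) * Bpoly r g (zf t \<alpha> \<beta> x1 y1)"

end

theory Submission
  imports Defs
begin

text \<open>Interleaving \<open>A\<^sub>r\<^sub>,\<^sub>0, A\<^sub>r\<^sub>+\<^sub>1\<^sub>,\<^sub>1, A\<^sub>r\<^sub>+\<^sub>1\<^sub>,\<^sub>0, A\<^sub>r\<^sub>+\<^sub>2\<^sub>,\<^sub>1, \<dots>\<close>, and likewise the \<open>B\<close>'s,
  gives two sequences obeying one three-term recurrence \<open>f(n+2) = p\<^sub>n f(n+1) - \<kappa>\<^sub>n z f(n)\<close> with
  \<open>p\<^sub>n \<ge> 3/2\<close> and \<open>0 < \<kappa>\<^sub>n \<le> 1\<close>; it comes from contiguous relations between the binomial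
  coefficients. From \<open>0 < P \<le> t\<^sup>2\<close> and \<open>|\<xi>|\<^sup>4 \<ge> 16 t\<^sup>2\<close> we get \<open>0 < |z| \<le> 1/2\<close>. Hence the
  \<open>B\<close>-sequence has modulus at least 1, and the Casoratian of the two sequences, which equals
  \<open>(\<Prod>\<kappa>\<^sub>i z) \<cdot> (-z/4)\<close>, is nonzero of modulus at most \<open>1/8\<close>. If both \<open>\<Sigma>\<close>'s vanish, then
  \<open>(\<eta>\<^sub>2/\<xi>\<^sub>2) A = \<plusminus>(\<eta>\<^sub>1/\<xi>\<^sub>1) B\<close> at two consecutive indices; as \<open>|\<eta>/\<xi>| = 1\<close>, the Casoratian
  there is \<open>0\<close> (equal signs, \<open>h = 0\<close>) or of modulus \<open>2|B\<^sub>n B\<^sub>n\<^sub>+\<^sub>1| \<ge> 2\<close> (opposite signs,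
  \<open>h = 1\<close>). Of the hypotheses only \<open>t \<ge> 16\<close>, \<open>x\<^sub>1, x\<^sub>2 \<noteq> 0\<close>, \<open>y\<^sub>1 \<noteq> 0\<close> and
  \<open>0 < P(x\<^sub>1, y\<^sub>1) \<le> t\<^sup>2\<close> are needed.\<close>

lemma sum_power_contiguous:
  fixes a b c :: "nat \<Rightarrow> real" and \<alpha> \<beta> \<gamma> :: real and w :: "'a :: {real_algebra_1, comm_ring_1}"
  assumes "\<gamma> * c 0 = \<alpha> * a 0" and "\<And>m. \<gamma> * c (Suc m) = \<alpha> * a (Suc m) + \<beta> * b m"
  shows "of_real \<gamma> * (\<Sum>m<Suc K. of_real (c m) * w^m)
           = of_real \<alpha> * (\<Sum>m<Suc K. of_real (a m) * w^m) + of_real \<beta> * w * (\<Sum>m<K. of_real (b m) * w^m)"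
proof -
  have "of_real \<gamma> * (\<Sum>m<Suc K. of_real (c m) * w^m) = (\<Sum>m<Suc K. of_real (\<gamma> * c m) * w^m)"
    by (simp add: sum_distrib_left mult.assoc del: sum.lessThan_Suc)
  also have "\<dots> = of_real \<alpha> * (\<Sum>m<Suc K. of_real (a m) * w^m) + (\<Sum>m<K. of_real (\<beta> * b m) * w^Suc m)"
    unfolding sum.lessThan_Suc_shift using assms
    by (simp add: sum_distrib_left sum.distrib algebra_simps)
  also have "(\<Sum>m<K. of_real (\<beta> * b m) * w^Suc m) = of_real \<beta> * w * (\<Sum>m<K. of_real (b m) * w^m)"
    by (simp add: sum_distrib_left algebra_simps)
  finally show ?thesis .
qed

lemma Suc_times_binomial_real:
  "(real k + 1) * real (Suc n choose Suc k) = (real n + 1) * real (n choose k)"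
  using arg_cong[OF Suc_times_binomial[of k n], of real]
  by (simp only: of_nat_mult of_nat_Suc add.commute)

lemma Suc_times_gbinomial_real:
  "(real k + 1) * ((a + 1) gchoose Suc k) = (a + 1) * (a gchoose k)"
  using Suc_times_gbinomial[of k a] by (simp add: add.commute)

lemma binomial_odd_middle: "Suc (2*r) choose Suc r = Suc (2*r) choose r"
  using binomial_symmetric[of "Suc r" "Suc (2*r)"] by simp

lemma norm_incseq_of_dominant_recurrence:
  fixes f p q :: "nat \<Rightarrow> 'a::real_normed_div_algebra"
  assumes rec: "\<And>n. f (n+2) = p n * f (n+1) + q n * f n"
    and dominant: "\<And>n. norm (q n) + 1 \<le> norm (p n)"
    and start: "norm (f 0) \<le> norm (f 1)"
  shows "norm (f n) \<le> norm (f (Suc n))"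
proof (induction n)
  case (Suc n)
  have "p n * f (n+1) = f (n+2) - q n * f n"
    using rec[of n] by simp
  hence "norm (p n) * norm (f (n+1)) \<le> norm (f (n+2)) + norm (q n) * norm (f n)"
    by (metis norm_mult norm_triangle_ineq4)
  also have "\<dots> \<le> norm (f (n+2)) + norm (q n) * norm (f (n+1))"
    using Suc.IH by (simp add: mult_left_mono)
  finally have "(norm (p n) - norm (q n)) * norm (f (n+1)) \<le> norm (f (n+2))"
    by (simp add: algebra_simps)
  moreover have "norm (f (n+1)) \<le> (norm (p n) - norm (q n)) * norm (f (n+1))"
    using dominant[of n] mult_right_mono[of 1 "norm (p n) - norm (q n)" "norm (f (n+1))"] by simp
  ultimately show ?case by simp
qed (use start in simp)

definition casoratian :: "(nat \<Rightarrow> 'a::comm_ring) \<Rightarrow> (nat \<Rightarrow> 'a) \<Rightarrow> nat \<Rightarrow> 'a" where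
  "casoratian f g n = f (Suc n) * g n - f n * g (Suc n)"

lemma casoratian_of_recurrence:
  fixes f g p q :: "nat \<Rightarrow> 'a::comm_ring_1"
  assumes "\<And>n. f (n+2) = p n * f (n+1) + q n * f n"
    and "\<And>n. g (n+2) = p n * g (n+1) + q n * g n"
  shows "casoratian f g n = (\<Prod>i<n. - q i) * casoratian f g 0"
proof (induction n)
  case (Suc n)
  have "casoratian f g (Suc n) = - q n * casoratian f g n"
    using assms[of n] by (simp add: casoratian_def algebra_simps)
  thus ?case using Suc.IH by (simp add: mult.assoc mult.commute)
qed simp

lemma casoratian_of_proportional:
  fixes f g :: "nat \<Rightarrow> 'a::comm_ring"
  assumes "a * f n = c * g n" and "a * f (Suc n) = d * g (Suc n)"
  shows "a * casoratian f g n = (d - c) * g n * g (Suc n)"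
proof -
  have "a * casoratian f g n = (a * f (Suc n)) * g n - (a * f n) * g (Suc n)"
    by (simp add: casoratian_def algebra_simps)
  thus ?thesis unfolding assms by (simp add: algebra_simps)
qed

definition Acoeff :: "nat \<Rightarrow> nat \<Rightarrow> nat \<Rightarrow> real" where
  "Acoeff r g m = (if m \<le> r then ((real (r - g) + 1/4) gchoose m) * real ((2*r - g - m) choose (r - g)) else 0)"

definition Bcoeff :: "nat \<Rightarrow> nat \<Rightarrow> nat \<Rightarrow> real" where
  "Bcoeff r g m = (if m \<le> r - g then ((real r - 1/4) gchoose m) * real ((2*r - g - m) choose r) else 0)"

lemma Apoly_eq_coeff_sum:
  assumes "r < K"
  shows "Apoly r g z = (\<Sum>m<K. of_real (Acoeff r g m) * (-z)^m)"
proof -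
  have "Apoly r g z = (\<Sum>m\<in>{0..r}. of_real (Acoeff r g m) * (-z)^m)"
    unfolding Apoly_def Acoeff_def by (intro sum.cong) auto
  also have "\<dots> = (\<Sum>m<K. of_real (Acoeff r g m) * (-z)^m)"
    using assms by (intro sum.mono_neutral_left) (auto simp: Acoeff_def)
  finally show ?thesis .
qed

lemma Bpoly_eq_coeff_sum:
  assumes "r < K"
  shows "Bpoly r g z = (\<Sum>m<K. of_real (Bcoeff r g m) * (-z)^m)"
proof -
  have "Bpoly r g z = (\<Sum>m\<in>{0..r-g}. of_real (Bcoeff r g m) * (-z)^m)"
    unfolding Bpoly_def Bcoeff_def by (intro sum.cong) auto
  also have "\<dots> = (\<Sum>m<K. of_real (Bcoeff r g m) * (-z)^m)"
    using assms by (intro sum.mono_neutral_left) (auto simp: Bcoeff_def)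
  finally show ?thesis .
qed

lemma Acoeff_contiguous_0:
  "4*(real r+1) * Acoeff (r+1) 0 0 = 8*(real r+1) * Acoeff (r+1) 1 0"
  "4*(real r+1) * Acoeff (r+1) 0 (Suc k) = 8*(real r+1) * Acoeff (r+1) 1 (Suc k) + (4*real r+3) * Acoeff r 0 k"
proof -
  show "4*(real r+1) * Acoeff (r+1) 0 0 = 8*(real r+1) * Acoeff (r+1) 1 0"
    using binomial_odd_middle[of r] by (simp add: Acoeff_def)
  show "4*(real r+1) * Acoeff (r+1) 0 (Suc k) = 8*(real r+1) * Acoeff (r+1) 1 (Suc k) + (4*real r+3) * Acoeff r 0 k"
  proof (cases "k \<le> r")
    case True
    define a where "a = real r + 1/4"
    define N where "N = 2*r - k"
    have c: "Acoeff (r+1) 0 (Suc k) = ((a+1) gchoose Suc k) * real (Suc N choose Suc r)"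
      "Acoeff (r+1) 1 (Suc k) = (a gchoose Suc k) * real (N choose r)"
      "Acoeff r 0 k = (a gchoose k) * real (N choose r)"
      using True by (simp_all add: Acoeff_def a_def N_def Suc_diff_le add.commute)
    have "(real k + 1) * ((a+1) gchoose Suc k) = (a + 1) * (a gchoose k)"
      by (rule Suc_times_gbinomial_real)
    moreover have "(real r + 1) * real (Suc N choose Suc r) = (2*real r - real k + 1) * real (N choose r)"
      using Suc_times_binomial_real[of r N] True by (simp add: N_def of_nat_diff)
    moreover have "(a gchoose Suc k) = ((a+1) gchoose Suc k) - (a gchoose k)"
      by (simp add: gbinomial_Suc_Suc)
    ultimately show ?thesis unfolding c a_def by algebra
  qed (simp add: Acoeff_def)
qed

lemma Acoeff_contiguous_1:
  assumes "r \<ge> 1"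
  shows "4*(real r+1) * Acoeff (r+1) 1 0 = 4*(2*real r+1) * Acoeff r 0 0"
    "4*(real r+1) * Acoeff (r+1) 1 (Suc k) = 4*(2*real r+1) * Acoeff r 0 (Suc k) + (4*real r+1) * Acoeff r 1 k"
proof -
  show "4*(real r+1) * Acoeff (r+1) 1 0 = 4*(2*real r+1) * Acoeff r 0 0"
    using Suc_times_binomial_real[of r "2*r"] binomial_odd_middle[of r]
    by (simp add: Acoeff_def del: binomial_Suc_Suc) argo
  obtain q where q: "r = Suc q" using assms by (cases r) auto
  show "4*(real r+1) * Acoeff (r+1) 1 (Suc k) = 4*(2*real r+1) * Acoeff r 0 (Suc k) + (4*real r+1) * Acoeff r 1 k"
  proof (cases "k \<le> r")
    case True
    define a where "a = real r + 1/4"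
    define M where "M = 2*r - k - 1"
    have sM: "2*(r+1) - 1 - Suc k = Suc M" using True assms by (simp add: M_def)
    have "Acoeff (r+1) 1 (Suc k) = (a gchoose Suc k) * real (Suc M choose r)"
      using True by (simp only: Acoeff_def a_def sM) simp
    moreover have "Acoeff r 1 k = ((a-1) gchoose k) * real (M choose q)"
      using True q by (simp add: Acoeff_def a_def M_def add.commute)
    moreover have "Acoeff r 0 (Suc k) = (a gchoose Suc k) * real (M choose r)"
    proof (cases "Suc k \<le> r")
      case False
      hence "M < r" using True assms by (simp add: M_def)
      thus ?thesis using False by (simp add: Acoeff_def)
    qed (simp add: Acoeff_def a_def M_def)
    moreover have "(real k + 1) * (a gchoose Suc k) = a * ((a-1) gchoose k)"
      using Suc_times_gbinomial_real[of k "a-1"] by simp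
    moreover have "real (Suc M choose r) = real (M choose r) + real (M choose q)"
      unfolding q binomial_Suc_Suc by simp
    moreover have "real r * real (Suc M choose r) = (2*real r - real k) * real (M choose q)"
      using Suc_times_binomial_real[of q M] True q
      by (simp add: M_def of_nat_diff del: binomial_Suc_Suc) argo
    ultimately show ?thesis using a_def by algebra
  qed (simp add: Acoeff_def)
qed

lemma Bcoeff_contiguous_0:
  "4*(real r+1) * Bcoeff (r+1) 0 0 = 8*(real r+1) * Bcoeff (r+1) 1 0"
  "4*(real r+1) * Bcoeff (r+1) 0 (Suc k) = 8*(real r+1) * Bcoeff (r+1) 1 (Suc k) + (4*real r+3) * Bcoeff r 0 k"
proof -
  show "4*(real r+1) * Bcoeff (r+1) 0 0 = 8*(real r+1) * Bcoeff (r+1) 1 0"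
    using binomial_odd_middle[of r] by (simp add: Bcoeff_def)
  show "4*(real r+1) * Bcoeff (r+1) 0 (Suc k) = 8*(real r+1) * Bcoeff (r+1) 1 (Suc k) + (4*real r+3) * Bcoeff r 0 k"
  proof (cases "k \<le> r")
    case True
    define b where "b = real r - 1/4"
    define N where "N = 2*r - k"
    have c: "Bcoeff (r+1) 0 (Suc k) = ((b+1) gchoose Suc k) * real (Suc N choose Suc r)"
      "Bcoeff r 0 k = (b gchoose k) * real (N choose r)"
      using True by (simp_all add: Bcoeff_def b_def N_def Suc_diff_le algebra_simps)
    have "Bcoeff (r+1) 1 (Suc k) = ((b+1) gchoose Suc k) * real (N choose Suc r)"
    proof (cases "Suc k \<le> r")
      case False
      hence "N < Suc r" using True by (simp add: N_def)
      thus ?thesis using False by (simp add: Bcoeff_def)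
    qed (simp add: Bcoeff_def b_def N_def algebra_simps)
    moreover have "(real k + 1) * ((b+1) gchoose Suc k) = (b + 1) * (b gchoose k)"
      by (rule Suc_times_gbinomial_real)
    moreover have "real (Suc N choose Suc r) = real (N choose r) + real (N choose Suc r)"
      unfolding binomial_Suc_Suc by simp
    moreover have "(real r + 1) * real (Suc N choose Suc r) = (2*real r - real k + 1) * real (N choose r)"
      using Suc_times_binomial_real[of r N] True by (simp add: N_def of_nat_diff)
    ultimately show ?thesis unfolding c b_def by algebra
  qed (simp add: Bcoeff_def)
qed

lemma Bcoeff_contiguous_1:
  assumes "r \<ge> 1"
  shows "4*(real r+1) * Bcoeff (r+1) 1 0 = 4*(2*real r+1) * Bcoeff r 0 0"
    "4*(real r+1) * Bcoeff (r+1) 1 (Suc k) = 4*(2*real r+1) * Bcoeff r 0 (Suc k) + (4*real r+1) * Bcoeff r 1 k"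
proof -
  show "4*(real r+1) * Bcoeff (r+1) 1 0 = 4*(2*real r+1) * Bcoeff r 0 0"
    using Suc_times_binomial_real[of r "2*r"] by (simp add: Bcoeff_def del: binomial_Suc_Suc) argo
  show "4*(real r+1) * Bcoeff (r+1) 1 (Suc k) = 4*(2*real r+1) * Bcoeff r 0 (Suc k) + (4*real r+1) * Bcoeff r 1 k"
  proof (cases "k < r")
    case True
    define b where "b = real r - 1/4"
    define N where "N = 2*r - k - 1"
    have sN: "2*(r+1) - 1 - Suc k = Suc N" using True by (simp add: N_def)
    have c: "Bcoeff (r+1) 1 (Suc k) = ((b+1) gchoose Suc k) * real (Suc N choose Suc r)"
      "Bcoeff r 0 (Suc k) = (b gchoose Suc k) * real (N choose r)"
      "Bcoeff r 1 k = (b gchoose k) * real (N choose r)"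
      using True by (simp_all only: Bcoeff_def b_def sN N_def)
        (simp_all add: algebra_simps del: binomial_Suc_Suc)
    have "(real k + 1) * ((b+1) gchoose Suc k) = (b + 1) * (b gchoose k)"
      by (rule Suc_times_gbinomial_real)
    moreover have "(real r + 1) * real (Suc N choose Suc r) = (2*real r - real k) * real (N choose r)"
      using Suc_times_binomial_real[of r N] True by (simp add: N_def of_nat_diff)
    moreover have "(b gchoose Suc k) = ((b+1) gchoose Suc k) - (b gchoose k)"
      by (simp add: gbinomial_Suc_Suc)
    ultimately show ?thesis unfolding c b_def by algebra
  qed (use assms in \<open>simp add: Bcoeff_def\<close>)
qed

lemma Apoly_contiguous_0:
  "4*(of_nat r+1) * Apoly (r+1) 0 z = 8*(of_nat r+1) * Apoly (r+1) 1 z - (4*of_nat r+3) * z * Apoly r 0 z"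
proof -
  have sums: "Apoly (r+1) 0 z = (\<Sum>m<Suc (Suc r). of_real (Acoeff (r+1) 0 m) * (-z)^m)"
    "Apoly (r+1) 1 z = (\<Sum>m<Suc (Suc r). of_real (Acoeff (r+1) 1 m) * (-z)^m)"
    "Apoly r 0 z = (\<Sum>m<Suc r. of_real (Acoeff r 0 m) * (-z)^m)"
    by (rule Apoly_eq_coeff_sum; simp)+
  have "of_real (4*(real r+1)) * Apoly (r+1) 0 z
      = of_real (8*(real r+1)) * Apoly (r+1) 1 z + of_real (4*real r+3) * (-z) * Apoly r 0 z"
    unfolding sums by (rule sum_power_contiguous; rule Acoeff_contiguous_0)
  thus ?thesis by simp
qed

lemma Apoly_contiguous_1:
  assumes "r \<ge> 1"
  shows "4*(of_nat r+1) * Apoly (r+1) 1 z = 4*(2*of_nat r+1) * Apoly r 0 z - (4*of_nat r+1) * z * Apoly r 1 z"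
proof -
  have sums: "Apoly (r+1) 1 z = (\<Sum>m<Suc (Suc r). of_real (Acoeff (r+1) 1 m) * (-z)^m)"
    "Apoly r 0 z = (\<Sum>m<Suc (Suc r). of_real (Acoeff r 0 m) * (-z)^m)"
    "Apoly r 1 z = (\<Sum>m<Suc r. of_real (Acoeff r 1 m) * (-z)^m)"
    by (rule Apoly_eq_coeff_sum; simp)+
  have "of_real (4*(real r+1)) * Apoly (r+1) 1 z
      = of_real (4*(2*real r+1)) * Apoly r 0 z + of_real (4*real r+1) * (-z) * Apoly r 1 z"
    unfolding sums by (rule sum_power_contiguous; rule Acoeff_contiguous_1[OF assms])
  thus ?thesis by simp
qed

lemma Bpoly_contiguous_0:
  "4*(of_nat r+1) * Bpoly (r+1) 0 z = 8*(of_nat r+1) * Bpoly (r+1) 1 z - (4*of_nat r+3) * z * Bpoly r 0 z"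
proof -
  have sums: "Bpoly (r+1) 0 z = (\<Sum>m<Suc (Suc r). of_real (Bcoeff (r+1) 0 m) * (-z)^m)"
    "Bpoly (r+1) 1 z = (\<Sum>m<Suc (Suc r). of_real (Bcoeff (r+1) 1 m) * (-z)^m)"
    "Bpoly r 0 z = (\<Sum>m<Suc r. of_real (Bcoeff r 0 m) * (-z)^m)"
    by (rule Bpoly_eq_coeff_sum; simp)+
  have "of_real (4*(real r+1)) * Bpoly (r+1) 0 z
      = of_real (8*(real r+1)) * Bpoly (r+1) 1 z + of_real (4*real r+3) * (-z) * Bpoly r 0 z"
    unfolding sums by (rule sum_power_contiguous; rule Bcoeff_contiguous_0)
  thus ?thesis by simp
qed

lemma Bpoly_contiguous_1:
  assumes "r \<ge> 1"
  shows "4*(of_nat r+1) * Bpoly (r+1) 1 z = 4*(2*of_nat r+1) * Bpoly r 0 z - (4*of_nat r+1) * z * Bpoly r 1 z"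
proof -
  have sums: "Bpoly (r+1) 1 z = (\<Sum>m<Suc (Suc r). of_real (Bcoeff (r+1) 1 m) * (-z)^m)"
    "Bpoly r 0 z = (\<Sum>m<Suc (Suc r). of_real (Bcoeff r 0 m) * (-z)^m)"
    "Bpoly r 1 z = (\<Sum>m<Suc r. of_real (Bcoeff r 1 m) * (-z)^m)"
    by (rule Bpoly_eq_coeff_sum; simp)+
  have "of_real (4*(real r+1)) * Bpoly (r+1) 1 z
      = of_real (4*(2*real r+1)) * Bpoly r 0 z + of_real (4*real r+1) * (-z) * Bpoly r 1 z"
    unfolding sums by (rule sum_power_contiguous; rule Bcoeff_contiguous_1[OF assms])
  thus ?thesis by simp
qed

definition interleave :: "(nat \<Rightarrow> nat \<Rightarrow> 'a) \<Rightarrow> nat \<Rightarrow> 'a" where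
  "interleave F n = (if even n then F (n div 2) 0 else F (Suc n div 2) 1)"

lemma interleave_even [simp]: "interleave F (2*r) = F r 0"
  and interleave_odd [simp]: "interleave F (Suc (2*r)) = F (Suc r) 1"
  by (simp_all add: interleave_def)

text \<open>For \<open>n = 2r\<close> and \<open>n = 2r+1\<close> the recurrence is the contiguous relation \<open>_contiguous_0\<close> at
  \<open>r\<close>, resp. \<open>_contiguous_1\<close> at \<open>r+1\<close>, divided by its leading coefficient.\<close>

definition rec_p :: "nat \<Rightarrow> real" where
  "rec_p n = (let r = real (n div 2) in if even n then 2 else (8*r+12) / (4*r+8))"

definition rec_kappa :: "nat \<Rightarrow> real" where
  "rec_kappa n = (let r = real (n div 2) in if even n then (4*r+3) / (4*r+4) else (4*r+5) / (4*r+8))"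

lemma rec_p_ge: "rec_p n \<ge> 3/2"
  by (simp add: rec_p_def Let_def field_simps)

lemma rec_kappa_bounds: "0 < rec_kappa n" "rec_kappa n \<le> 1"
  by (simp_all add: rec_kappa_def Let_def add_pos_nonneg)

lemma interleave_recurrence:
  fixes F :: "nat \<Rightarrow> nat \<Rightarrow> complex"
  assumes contiguous_0: "\<And>r. 4*(of_nat r+1) * F (r+1) 0 = 8*(of_nat r+1) * F (r+1) 1 - (4*of_nat r+3) * z * F r 0"
    and contiguous_1: "\<And>r. r \<ge> 1 \<Longrightarrow>
      4*(of_nat r+1) * F (r+1) 1 = 4*(2*of_nat r+1) * F r 0 - (4*of_nat r+1) * z * F r 1"
  shows "interleave F (n+2) = of_real (rec_p n) * interleave F (n+1) - of_real (rec_kappa n) * z * interleave F n"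
proof (cases "even n")
  case True
  then obtain r where n: "n = 2*r" by blast
  have "(4*real r+4) * rec_kappa n = 4*real r+3"
    by (simp add: rec_kappa_def n Let_def add_pos_nonneg)
  hence kappa: "(4*of_nat r+4) * of_real (rec_kappa n) = (4*of_nat r+3 :: complex)"
    by (metis (mono_tags, lifting) of_real_add of_real_mult of_real_numeral of_real_of_nat_eq)
  have seq: "interleave F (n+2) = F (r+1) 0" "interleave F (n+1) = F (r+1) 1" "interleave F n = F r 0"
    using interleave_even[of F "r+1"] by (simp_all add: n)
  have "(4*of_nat r+4) * interleave F (n+2)
     = (4*of_nat r+4) * (2 * interleave F (n+1) - of_real (rec_kappa n) * z * interleave F n)"
    using contiguous_0[of r] kappa unfolding seq by simp algebra
  moreover have "rec_p n = 2"
    using True by (simp add: rec_p_def Let_def)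
  ultimately show ?thesis
    using of_nat_neq_0[of "4*r+3", where 'a=complex] by (simp add: add_ac)
next
  case False
  then obtain r where n: "n = Suc (2*r)" by (auto elim: oddE)
  have "(4*real r+8) * rec_p n = 8*real r+12" "(4*real r+8) * rec_kappa n = 4*real r+5"
    by (simp_all add: rec_p_def rec_kappa_def n Let_def add_pos_nonneg)
  hence coeffs: "(4*of_nat r+8) * of_real (rec_p n) = (8*of_nat r+12 :: complex)"
    "(4*of_nat r+8) * of_real (rec_kappa n) = (4*of_nat r+5 :: complex)"
    by (metis (mono_tags, lifting) of_real_add of_real_mult of_real_numeral of_real_of_nat_eq)+
  have seq: "interleave F (n+2) = F (r+2) 1" "interleave F (n+1) = F (r+1) 0" "interleave F n = F (r+1) 1"
    using interleave_odd[of F "r+1"] interleave_even[of F "r+1"] by (simp_all add: n)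
  have "(4*of_nat r+8) * interleave F (n+2)
     = (4*of_nat r+8) * (of_real (rec_p n) * interleave F (n+1) - of_real (rec_kappa n) * z * interleave F n)"
    using contiguous_1[of "r+1"] coeffs unfolding seq by simp algebra
  thus ?thesis
    using of_nat_neq_0[of "4*r+7", where 'a=complex] by (simp add: add_ac)
qed

lemma interleaved_Apoly_Bpoly_bounds:
  fixes z :: complex
  defines "A \<equiv> interleave (\<lambda>r g. Apoly r g z)" and "B \<equiv> interleave (\<lambda>r g. Bpoly r g z)"
  assumes z: "z \<noteq> 0" "cmod z \<le> 1/2"
  shows "1 \<le> cmod (B n)" and "casoratian A B n \<noteq> 0" and "cmod (casoratian A B n) \<le> 1/8"
proof -
  define p where "p n = complex_of_real (rec_p n)" for n
  define q where "q n = - complex_of_real (rec_kappa n) * z" for n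
  have rec: "A (n+2) = p n * A (n+1) + q n * A n" "B (n+2) = p n * B (n+1) + q n * B n" for n
    using interleave_recurrence[of "\<lambda>r g. Apoly r g z" z n, OF Apoly_contiguous_0 Apoly_contiguous_1]
      interleave_recurrence[of "\<lambda>r g. Bpoly r g z" z n, OF Bpoly_contiguous_0 Bpoly_contiguous_1]
    by (simp_all add: A_def B_def p_def q_def)
  have norm_q: "cmod (q n) \<le> 1/2" for n
    using rec_kappa_bounds[of n] z(2) mult_mono[of "rec_kappa n" 1 "cmod z" "1/2"]
    by (simp add: q_def norm_mult)
  have "cmod (q n) + 1 \<le> cmod (p n)" for n
    using norm_q[of n] rec_p_ge[of n] by (simp add: p_def)
  moreover have base: "A 0 = 1" "A 1 = 1 - z/4" "B 0 = 1" "B 1 = 1"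
    by (simp_all add: A_def B_def interleave_def Apoly_def Bpoly_def)
  ultimately have "incseq (\<lambda>n. cmod (B n))"
    using norm_incseq_of_dominant_recurrence[of B p q] rec(2) by (simp add: incseq_SucI)
  thus "1 \<le> cmod (B n)"
    using base(3) incseqD[of _ 0 n] by fastforce
  have cas: "casoratian A B n = (\<Prod>i<n. - q i) * (- z/4)"
    using casoratian_of_recurrence[of A p q B n] rec base by (simp add: casoratian_def)
  have "q i \<noteq> 0" for i
    using rec_kappa_bounds(1)[of i] z(1) by (simp add: q_def)
  thus "casoratian A B n \<noteq> 0"
    using z(1) by (simp add: cas)
  have "(\<Prod>i<n. cmod (q i)) \<le> 1"
    using norm_q by (intro prod_le_1) (auto intro: order.trans[OF norm_q])
  hence "cmod (casoratian A B n) \<le> 1 * (cmod z / 4)"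
    unfolding cas norm_mult prod_norm[symmetric] by (intro mult_mono) (auto simp: norm_divide)
  thus "cmod (casoratian A B n) \<le> 1/8"
    using z(2) by simp
qed

lemma interleaved_Apoly_Bpoly_not_both_matched:
  fixes a b z :: complex
  assumes ab: "cmod a = 1" "cmod b = 1" and z: "z \<noteq> 0" "cmod z \<le> 1/2"
    and r: "r \<ge> 1" and h: "h \<in> {0, 1}"
  shows "\<not> (a * Apoly r 0 z = (-1)^r * b * Bpoly r 0 z \<and>
            a * Apoly (r+h) 1 z = (-1)^(r+h) * b * Bpoly (r+h) 1 z)"
proof
  define A where "A = interleave (\<lambda>r g. Apoly r g z)"
  define B where "B = interleave (\<lambda>r g. Bpoly r g z)"
  define c where "c = (-1)^r * b"
  assume "a * Apoly r 0 z = (-1)^r * b * Bpoly r 0 z \<and>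
          a * Apoly (r+h) 1 z = (-1)^(r+h) * b * Bpoly (r+h) 1 z"
  hence even: "a * A (2*r) = c * B (2*r)"
    and odd: "a * Apoly (r+h) 1 z = (-1)^h * c * Bpoly (r+h) 1 z"
    by (simp_all only: A_def B_def interleave_even) (simp_all add: c_def power_add mult_ac)
  show False
  proof (cases "h = 0")
    case True
    obtain k where k: "r = Suc k" using r by (cases r) auto
    have "a * A (Suc (2*k)) = c * B (Suc (2*k))"
      using odd True by (simp add: A_def B_def k)
    moreover have "Suc (Suc (2*k)) = 2*r" using k by simp
    ultimately have "a * casoratian A B (Suc (2*k)) = 0"
      using casoratian_of_proportional[of a A _ c B c] even by simp
    thus False
      using ab(1) interleaved_Apoly_Bpoly_bounds(2)[OF z] by (auto simp: A_def B_def)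
  next
    case False
    with h have "a * A (Suc (2*r)) = - c * B (Suc (2*r))"
      using odd by (simp add: A_def B_def)
    hence "a * casoratian A B (2*r) = - 2 * c * B (2*r) * B (Suc (2*r))"
      using casoratian_of_proportional[of a A "2*r" c B "-c"] even by simp
    hence "cmod (a * casoratian A B (2*r)) = cmod (- 2 * c * B (2*r) * B (Suc (2*r)))"
      by (rule arg_cong)
    hence "cmod (casoratian A B (2*r)) = 2 * (cmod (B (2*r)) * cmod (B (Suc (2*r))))"
      using ab by (simp add: c_def norm_mult norm_power)
    moreover have "1 \<le> cmod (B (2*r)) * cmod (B (Suc (2*r)))"
      using interleaved_Apoly_Bpoly_bounds(1)[OF z] unfolding B_def
      by (metis mult_mono' mult_1 zero_le_one)
    ultimately show False
      using interleaved_Apoly_Bpoly_bounds(3)[OF z, of "2*r"] by (simp add: A_def B_def)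
  qed
qed

lemma sqrt_2_pow_4: "sqrt 2 ^ 4 = (4::real)"
  using power_mult[of "sqrt (2::real)" 2 2] by simp

lemma cmod_of_int_pm_imaginary:
  "cmod (of_int x + \<i> * complex_of_real q * of_int y) = sqrt (x^2 + q^2 * y^2)"
  "cmod (of_int x - \<i> * complex_of_real q * of_int y) = sqrt (x^2 + q^2 * y^2)"
  by (simp_all add: cmod_def power_mult_distrib)

lemma xi_nonzero:
  assumes "\<alpha> ^ 4 = 1 + \<i> * sqt t" and "x \<noteq> 0"
  shows "xi t \<alpha> x y \<noteq> 0"
proof -
  have "\<alpha> \<noteq> 0" using assms(1) by (auto simp: complex_eq_iff sqt_def)
  moreover have "of_int x - \<i> * sqt t * of_int y \<noteq> 0"
    using assms(2) by (auto simp: complex_eq_iff sqt_def)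
  ultimately show ?thesis by (simp add: xi_def)
qed

lemma norm_eta_eq_norm_xi:
  assumes "\<alpha> ^ 4 = 1 + \<i> * sqt t" and "\<beta> ^ 4 = -1 + \<i> * sqt t"
  shows "cmod (eta t \<beta> x y) = cmod (xi t \<alpha> x y)"
proof -
  have "cmod \<alpha> ^ 4 = cmod (1 + \<i> * sqt t)" by (metis assms(1) norm_power)
  also have "\<dots> = cmod (-1 + \<i> * sqt t)" by (simp add: cmod_def sqt_def)
  also have "\<dots> = cmod \<beta> ^ 4" by (metis assms(2) norm_power)
  finally have "cmod \<alpha> = cmod \<beta>" by (rule power_eq_imp_eq_base) auto
  thus ?thesis
    unfolding eta_def xi_def norm_mult sqt_def cmod_of_int_pm_imaginary by simp
qed

text \<open>Stated abstractly because \<open>algebra\<close> cannot use \<open>\<i>\<^sup>2 = -1\<close> on its own.\<close>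

lemma quartic_form_identity:
  fixes i s T x y :: "'a::idom"
  assumes "i * i = -1" and "s * s = T"
  shows "4 * (1 + i*s) * (x - i*s*y)^4 - 4 * (-1 + i*s) * (x + i*s*y)^4
           = 8 * (x^4 + 4*T*x^3*y - 6*T*x^2*y^2 - 4*T^2*x*y^3 + T^2*y^4)"
  using assms by algebra

lemma xi_pow4_sub_eta_pow4:
  assumes "t \<ge> 0" and "\<alpha> ^ 4 = 1 + \<i> * sqt t" and "\<beta> ^ 4 = -1 + \<i> * sqt t"
  shows "xi t \<alpha> x y ^ 4 - eta t \<beta> x y ^ 4 = 8 * of_int (Pform t x y)"
proof -
  have sqrt2: "complex_of_real (sqrt 2) ^ 4 = 4"
    by (metis sqrt_2_pow_4 of_real_numeral of_real_power)
  have "sqt t * sqt t = of_int t"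
    using assms(1) by (simp add: sqt_def flip: of_real_mult)
  hence "4 * (1 + \<i> * sqt t) * (of_int x - \<i> * sqt t * of_int y)^4
       - 4 * (-1 + \<i> * sqt t) * (of_int x + \<i> * sqt t * of_int y)^4
       = 8 * (of_int x^4 + 4*of_int t*of_int x^3*of_int y - 6*of_int t*of_int x^2*of_int y^2
              - 4*of_int t^2*of_int x*of_int y^3 + of_int t^2*of_int y^4)"
    by (rule quartic_form_identity[OF i_squared])
  also have "\<dots> = 8 * of_int (Pform t x y)"
    by (simp add: Pform_def)
  finally have "4 * (1 + \<i> * sqt t) * (of_int x - \<i> * sqt t * of_int y)^4
       - 4 * (-1 + \<i> * sqt t) * (of_int x + \<i> * sqt t * of_int y)^4 = 8 * of_int (Pform t x y)" .
  thus ?thesis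
    by (simp add: xi_def eta_def power_mult_distrib sqrt2 assms(2,3))
qed

lemma norm_xi_pow4_ge:
  assumes t: "t \<ge> 16" and \<alpha>: "\<alpha> ^ 4 = 1 + \<i> * sqt t" and y: "y \<noteq> 0"
  shows "16 * of_int t ^ 2 \<le> cmod (xi t \<alpha> x y ^ 4)"
proof -
  define u where "u = of_int x - \<i> * sqt t * of_int y"
  have "sqrt (real_of_int t) \<ge> 4"
    using real_sqrt_le_mono[of 16 "real_of_int t"] t by simp
  hence "4 \<le> cmod (1 + \<i> * sqt t)"
    using abs_Im_le_cmod[of "1 + \<i> * sqt t"] by (simp add: sqt_def)
  moreover have "of_int t \<le> cmod u ^ 2"
  proof -
    have "t * 1 \<le> t * y^2"
      using t y by (intro mult_left_mono) (auto simp: int_one_le_iff_zero_less)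
    hence "t \<le> x^2 + t * y^2"
      by (simp add: add_increasing)
    hence "real_of_int t \<le> real_of_int x ^ 2 + real_of_int t * real_of_int y ^ 2"
      by (metis of_int_le_iff of_int_add of_int_mult of_int_power)
    thus ?thesis
      using t unfolding u_def sqt_def cmod_of_int_pm_imaginary by simp
  qed
  hence "of_int t ^ 2 \<le> cmod u ^ 4"
    using t power_mono[of "of_int t" "cmod u ^ 2" 2] by (simp add: power_mult[symmetric])
  moreover have "cmod (xi t \<alpha> x y ^ 4) = 4 * cmod (1 + \<i> * sqt t) * cmod u ^ 4"
    using sqrt_2_pow_4 by (simp add: xi_def u_def norm_mult norm_power power_mult_distrib \<alpha>)
  ultimately show ?thesis
    using mult_mono[of 4 "cmod (1 + \<i> * sqt t)" "of_int t ^ 2" "cmod u ^ 4"] by (simp add: mult.commute)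
qed

lemma zf_nonzero_and_small:
  assumes t: "t \<ge> 16" and \<alpha>: "\<alpha> ^ 4 = 1 + \<i> * sqt t" and \<beta>: "\<beta> ^ 4 = -1 + \<i> * sqt t"
    and xy: "x \<noteq> 0" "y \<noteq> 0" and P: "0 < Pform t x y" "Pform t x y \<le> t^2"
  shows "zf t \<alpha> \<beta> x y \<noteq> 0" and "cmod (zf t \<alpha> \<beta> x y) \<le> 1/2"
proof -
  have xi: "xi t \<alpha> x y \<noteq> 0"
    using xi_nonzero[OF \<alpha> xy(1)] .
  have "zf t \<alpha> \<beta> x y = (xi t \<alpha> x y ^ 4 - eta t \<beta> x y ^ 4) / xi t \<alpha> x y ^ 4"
    using xi by (simp add: zf_def power_divide diff_divide_distrib)
  hence z: "zf t \<alpha> \<beta> x y = 8 * of_int (Pform t x y) / xi t \<alpha> x y ^ 4"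
    using xi_pow4_sub_eta_pow4[OF _ \<alpha> \<beta>, of x y] t by simp
  show "zf t \<alpha> \<beta> x y \<noteq> 0"
    using xi P(1) by (simp add: z)
  have "cmod (zf t \<alpha> \<beta> x y) = 8 * of_int (Pform t x y) / cmod (xi t \<alpha> x y ^ 4)"
    using P(1) by (simp add: z norm_divide)
  also have "\<dots> \<le> 8 * of_int t ^ 2 / (16 * of_int t ^ 2)"
    using P norm_xi_pow4_ge[OF t \<alpha> xy(2)] t
    by (intro frac_le) (simp_all flip: of_int_le_iff)
  finally show "cmod (zf t \<alpha> \<beta> x y) \<le> 1/2"
    using t by simp
qed

theorem lemma6p2:
  fixes t x1 y1 x2 y2 :: int and \<alpha> \<beta> \<omega> :: complex and r h :: nat
  assumes ht: "t > 204"
    and h\<alpha>: "\<alpha> ^ 4 = 1 + \<i> * sqt t"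
    and h\<beta>: "\<beta> ^ 4 = -1 + \<i> * sqt t"
    and h\<omega>: "\<omega> \<in> {1, -1, \<i>, -\<i>}"
    and hne: "(x1, y1) \<noteq> (x2, y2)"
    and hpos1: "x1 > 0" "y1 > 0" and hcop1: "coprime x1 y1"
    and hpos2: "x2 > 0" "y2 > 0" and hcop2: "coprime x2 y2"
    and hP1: "0 < Pform t x1 y1" "Pform t x1 y1 \<le> t^2"
    and hP2: "0 < Pform t x2 y2" "Pform t x2 y2 \<le> t^2"
    and hxy1: "x1 * y1 > 64 * t^3"
    and hxy2: "x2 * y2 > 64 * t^3"
    and hrel1: "related t \<alpha> \<beta> x1 y1 \<omega>"
    and hrel2: "related t \<alpha> \<beta> x2 y2 \<omega>"
    and hsize: "cmod (xi t \<alpha> x2 y2) \<ge> cmod (xi t \<alpha> x1 y1)"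
    and hr: "r > 0"
    and hh: "h \<in> {0, 1}"
  shows "\<not> (Sigma t \<alpha> \<beta> x1 y1 x2 y2 r 0 = 0 \<and> Sigma t \<alpha> \<beta> x1 y1 x2 y2 (r + h) 1 = 0)"
proof -
  define a where "a = eta t \<beta> x2 y2 / xi t \<alpha> x2 y2"
  define b where "b = eta t \<beta> x1 y1 / xi t \<alpha> x1 y1"
  define z where "z = zf t \<alpha> \<beta> x1 y1"
  have t: "t \<ge> 16" using ht by simp
  have "cmod (eta t \<beta> x y / xi t \<alpha> x y) = 1" if "x > 0" for x y
    using norm_eta_eq_norm_xi[OF h\<alpha> h\<beta>] xi_nonzero[OF h\<alpha>] that by (simp add: norm_divide)
  hence "cmod a = 1" "cmod b = 1"
    using hpos1 hpos2 by (simp_all add: a_def b_def)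
  moreover have "z \<noteq> 0" "cmod z \<le> 1/2"
    using zf_nonzero_and_small[OF t h\<alpha> h\<beta> _ _ hP1] hpos1 by (auto simp: z_def)
  ultimately have "\<not> (a * Apoly r 0 z = (-1)^r * b * Bpoly r 0 z \<and>
                      a * Apoly (r+h) 1 z = (-1)^(r+h) * b * Bpoly (r+h) 1 z)"
    using interleaved_Apoly_Bpoly_not_both_matched hr hh by simp
  thus ?thesis
    unfolding Sigma_def a_def b_def z_def by simp
qed

end
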